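(* Let $m\ge 2$ be an integer, let $B\subseteq m\mathbb Z$ be a finite nonempty set, and let $F\subseteq\mathbb Z$ be a finite nonempty set all of whose elements are congruent to $\tilde f$ modulo $m$, where $\tilde f\in\{1,\dots,m-1\}$. Suppose there exist an integer $n\ge1$ and sets $S_1,\dots,S_n$ with $S_1\cup\cdots\cup S_n=m\mathbb N\cup B$ such that for each $i$ there is $W_i\subseteq\mathbb Z$ with $m\mathbb Z\setminus S_i=F+W_i$. If \[m\ge \tilde f+2\tilde f\left\lfloor\frac{n}{\tilde f}\right\rfloor+\operatorname{mod}_{\tilde f}n,\] then $C=m\mathbb N\cup B\cup F$ arises as a minimal additive complement in $\mathbb Z$.
   Context: $\mathbb N=\{0,1,2,\dots\}$, $m\mathbb N=\{mk:k\in\mathbb N\}$; $\operatorname{mod}_{a}n$ denotes the remainder of $n$ upon division by $a$. For $C,W\subseteq\mathbb Z$, $C+W=\{c+w:c\in C,w\in W\}$. $C$ is a minimal additive complement (MAC) to $W$ if $C+W=\mathbb Z$ and no proper subset $C'\subsetneq C$ satisfies $C'+W=\mathbb Z$. $C$ arises as a MAC if there exists $W\subseteq\mathbb Z$ to which $C$ is a MAC. *)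

theory Defs
  imports Main
begin

definition sumset :: "int set \<Rightarrow> int set \<Rightarrow> int set" where
  "sumset C W = {c + w | c w. c \<in> C \<and> w \<in> W}"

definition min_add_complement :: "int set \<Rightarrow> int set \<Rightarrow> bool" where
  "min_add_complement C W \<longleftrightarrow>
     sumset C W = UNIV \<and> (\<forall>C'. C' \<subset> C \<longrightarrow> sumset C' W \<noteq> UNIV)"

definition arises_as_MAC :: "int set \<Rightarrow> bool" where
  "arises_as_MAC C \<longleftrightarrow> (\<exists>W. min_add_complement C W)"

definition mult_nat :: "int \<Rightarrow> int set" where
  "mult_nat m = {m * int k | k. True}"

definition mult_int :: "int \<Rightarrow> int set" where
  "mult_int m = {m * k | k. True}"

end

theory Submission
  imports Defs
begin

(* Write A = mN \<union> B. Choose shifts s_1, ..., s_n in distinct residue classes mod m such that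
   no s_j is congruent to s_i + ft; the inequality on m says precisely that this is possible when
   they are placed in the lower halves of consecutive blocks of length 2 ft. Given V_i with
   F + V_i = mZ - S_i, let W consist of s_i alone in the class of s_i, of s_i + V_i in the class
   of s_i - ft, and of every other residue class entirely. Then each c \<in> S_i is represented in
   (A \<union> F) + W only as c + s_i.
   For (A \<union> F) + W = Z and for the elements of F to be indispensable, V_i is first changed far
   below A without changing F + V_i: a lower ray of the class of -ft is added (so that mN + W
   covers the class of s_i - ft), and the points E + k a - a' with a' \<noteq> a are removed, where
   k exceeds twice the diameter of F. Then E + k a + s_1 is represented only through a. *)

lemma mem_sumset_iff: "z \<in> sumset C W \<longleftrightarrow> (\<exists>c\<in>C. \<exists>w\<in>W. z = c + w)"
  unfolding sumset_def by blast

lemma add_mem_sumset: "c \<in> C \<Longrightarrow> w \<in> W \<Longrightarrow> c + w \<in> sumset C W"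
  unfolding sumset_def by blast

lemma sumset_Un_right: "sumset C (V \<union> W) = sumset C V \<union> sumset C W"
  unfolding sumset_def by blast

lemma sumset_mono_right: "V \<subseteq> W \<Longrightarrow> sumset C V \<subseteq> sumset C W"
  unfolding sumset_def by blast

lemma mem_mult_int_iff: "x \<in> mult_int m \<longleftrightarrow> m dvd x"
  unfolding mult_int_def dvd_def by auto

lemma min_add_complementI:
  assumes "sumset C W = UNIV"
    and "\<And>c. c \<in> C \<Longrightarrow> \<exists>z. \<forall>c'\<in>C. \<forall>w\<in>W. z = c' + w \<longrightarrow> c' = c"
  shows "min_add_complement C W"
  unfolding min_add_complement_def
proof (intro conjI allI impI assms(1))
  fix C' assume "C' \<subset> C"
  then obtain c where c: "c \<in> C" "c \<notin> C'" by blast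
  then obtain z where z: "\<forall>c'\<in>C. \<forall>w\<in>W. z = c' + w \<longrightarrow> c' = c" using assms(2) by blast
  have "z \<notin> sumset C' W"
    using z c \<open>C' \<subset> C\<close> unfolding sumset_def by blast
  then show "sumset C' W \<noteq> UNIV" by blast
qed

(* Values lie in the lower halves of blocks of length 2 t, so no two of them differ by t. *)
definition block_pos :: "int \<Rightarrow> int \<Rightarrow> int" where
  "block_pos t j = 2 * t * (j div t) + j mod t"

lemma block_pos_mod:
  assumes "0 < t"
  shows "block_pos t j mod (2 * t) = j mod t"
proof -
  have "0 \<le> j mod t" "j mod t < 2 * t"
    using assms pos_mod_bound[of t j] pos_mod_sign[of t j] by linarith+
  then show ?thesis unfolding block_pos_def by (simp add: mod_add_left_eq[symmetric])
qed

lemma strict_mono_block_pos: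
  assumes "0 < t"
  shows "strict_mono (block_pos t)"
proof (rule strict_monoI)
  fix j j' :: int assume "j < j'"
  then have "j div t \<le> j' div t" using assms by (simp add: zdiv_mono1)
  then consider "j div t < j' div t" | "j div t = j' div t" by linarith
  then show "block_pos t j < block_pos t j'"
  proof cases
    case 1
    then have "2 * t * (j div t) + 2 * t \<le> 2 * t * (j' div t)"
      using mult_left_mono[of "j div t + 1" "j' div t" "2 * t"] assms by (simp add: algebra_simps)
    moreover have "j mod t < t" "0 \<le> j' mod t" using assms by simp_all
    ultimately show ?thesis using assms unfolding block_pos_def by linarith
  next
    case 2
    have "j = t * (j' div t) + j mod t" by (simp add: 2[symmetric])
    moreover have "j' = t * (j' div t) + j' mod t" by simp
    ultimately have "j mod t < j' mod t" using \<open>j < j'\<close> by linarith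
    then show ?thesis using 2 unfolding block_pos_def by simp
  qed
qed

lemma block_pos_add_neq:
  assumes "0 < t"
  shows "block_pos t j + t \<noteq> block_pos t j'"
proof
  assume eq: "block_pos t j + t = block_pos t j'"
  have r: "0 \<le> j mod t" "j mod t < t" using assms by simp_all
  have "block_pos t j + t = (j mod t + t) + (j div t) * (2 * t)"
    unfolding block_pos_def by (simp add: algebra_simps)
  then have "(block_pos t j + t) mod (2 * t) = j mod t + t"
    using r by (simp only: mod_mult_self1) simp
  moreover have "block_pos t j' mod (2 * t) < t"
    using block_pos_mod[OF assms] assms by simp
  ultimately show False using eq r by simp
qed

lemma dvd_abs_less_imp_zero:
  fixes m x :: int
  assumes "m dvd x" and "\<bar>x\<bar> < m"
  shows "x = 0"
proof (rule ccontr)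
  assume "x \<noteq> 0"
  then have "\<bar>m\<bar> \<le> \<bar>x\<bar>" using assms(1) dvd_imp_le_int by blast
  then show False using assms(2) by linarith
qed

lemma exists_separated_shifts:
  fixes m t :: int and n :: nat
  assumes "0 < t" and "t + block_pos t (int n) \<le> m"
  shows "\<exists>s. (\<forall>i\<in>{1..n}. \<forall>j\<in>{1..n}. m dvd (s i - s j) \<longrightarrow> i = j)
           \<and> (\<forall>i\<in>{1..n}. \<forall>j\<in>{1..n}. \<not> m dvd (s i + t - s j))"
proof -
  define s where "s i = block_pos t (int i - 1)" for i :: nat
  have bounds: "0 \<le> s i \<and> s i + t < m" if "i \<in> {1..n}" for i
  proof -
    have "block_pos t 0 \<le> s i" "s i < block_pos t (int n)"
      using that strict_mono_block_pos[OF assms(1)]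
      unfolding s_def by (simp_all add: strict_mono_less_eq strict_mono_less)
    then show ?thesis using assms(2) by (simp add: block_pos_def)
  qed
  have "(m dvd (s i - s j) \<longrightarrow> i = j) \<and> \<not> m dvd (s i + t - s j)"
    if "i \<in> {1..n}" "j \<in> {1..n}" for i j
  proof (intro conjI impI notI)
    assume "m dvd (s i - s j)"
    moreover have "\<bar>s i - s j\<bar> < m" using bounds[OF that(1)] bounds[OF that(2)] assms(1) by linarith
    ultimately have "s i = s j" using dvd_abs_less_imp_zero by fastforce
    then show "i = j" using that strict_mono_eq[OF strict_mono_block_pos[OF assms(1)]]
      unfolding s_def by auto
  next
    assume "m dvd (s i + t - s j)"
    moreover have "\<bar>s i + t - s j\<bar> < m" using bounds[OF that(1)] bounds[OF that(2)] assms(1) by linarith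
    ultimately have "s i + t = s j" using dvd_abs_less_imp_zero by fastforce
    then show False using block_pos_add_neq[OF assms(1)] unfolding s_def by blast
  qed
  then show ?thesis by blast
qed

lemma abs_mult_less_imp_zero:
  fixes k x :: int
  assumes "\<bar>k * x\<bar> < k"
  shows "x = 0"
proof (rule ccontr)
  assume "x \<noteq> 0"
  have "0 < k" using assms by linarith
  have "k * 1 \<le> k * \<bar>x\<bar>" using \<open>x \<noteq> 0\<close> \<open>0 < k\<close> by (intro mult_left_mono) auto
  then show False using assms \<open>0 < k\<close> by (simp add: abs_mult)
qed

(* Removing these points from V makes E + k a representable in F + V only through a. *)
definition collision_set :: "int \<Rightarrow> int \<Rightarrow> int set \<Rightarrow> int set" where
  "collision_set E k F = {E + k * a - a' | a a'. a \<in> F \<and> a' \<in> F \<and> a' \<noteq> a}"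

lemma collision_set_bounds:
  fixes F :: "int set" and E k x :: int
  assumes "finite F" and "0 \<le> k" and "x \<in> collision_set E k F"
  shows "E + k * Min F - Max F \<le> x" and "x \<le> E + k * Max F - Min F"
proof -
  obtain a a' where a: "a \<in> F" "a' \<in> F" "x = E + k * a - a'"
    using assms(3) unfolding collision_set_def by blast
  have "k * Min F \<le> k * a" "k * a \<le> k * Max F" "Min F \<le> a'" "a' \<le> Max F"
    using a(1,2) assms(1,2) by (simp_all add: mult_left_mono)
  then show "E + k * Min F - Max F \<le> x" "x \<le> E + k * Max F - Min F" using a(3) by linarith+
qed

lemma exists_diff_notin_collision_set:
  fixes F :: "int set" and E k y :: int
  assumes "finite F" "F \<noteq> {}" and k: "\<forall>x\<in>F. \<forall>x'\<in>F. 2 * \<bar>x - x'\<bar> < k"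
  shows "\<exists>f\<in>F. y - f \<notin> collision_set E k F"
proof (rule ccontr)
  assume "\<not> ?thesis"
  then have coll: "\<exists>a\<in>F. \<exists>a'\<in>F. a' \<noteq> a \<and> y - f = E + k * a - a'" if "f \<in> F" for f
    using that unfolding collision_set_def by blast
  have lo: "Min F \<in> F" and hi: "Max F \<in> F" using assms(1,2) by simp_all
  obtain a a' where a: "a \<in> F" "a' \<in> F" "y - Min F = E + k * a - a'" using coll[OF lo] by blast
  define t where "t = E + k * a - y"
  have shift: "f + t \<in> F - {a}" if f: "f \<in> F" for f
  proof -
    obtain b b' where b: "b \<in> F" "b' \<in> F" "b' \<noteq> b" "y - f = E + k * b - b'"
      using coll[OF f] by blast
    have "k * (a - b) = (f - Min F) + (a' - b')" using a(3) b(4) by (simp add: algebra_simps)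
    then have "\<bar>k * (a - b)\<bar> \<le> \<bar>f - Min F\<bar> + \<bar>a' - b'\<bar>" by (simp only: abs_triangle_ineq)
    moreover have "2 * \<bar>f - Min F\<bar> < k" "2 * \<bar>a' - b'\<bar> < k" using k f lo a(2) b(2) by blast+
    ultimately have "\<bar>k * (a - b)\<bar> < k" by arith
    then have "b = a" using abs_mult_less_imp_zero by fastforce
    then have "f + t = b'" using b(4) unfolding t_def by simp
    then show ?thesis using b \<open>b = a\<close> by simp
  qed
  have "Max F + t \<le> Max F" using shift[OF hi] Max_ge[OF assms(1)] by blast
  moreover have "Min F \<le> Min F + t" using shift[OF lo] Min_le[OF assms(1)] by blast
  ultimately show False using shift[OF a(1)] by simp
qed

lemma sumset_diff_collision_set:
  fixes F V X :: "int set" and E k Y :: int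
  assumes "finite F" "F \<noteq> {}" and k: "\<forall>x\<in>F. \<forall>x'\<in>F. 2 * \<bar>x - x'\<bar> < k"
    and V: "sumset F V = X"
    and below: "\<And>y f. y \<in> X \<Longrightarrow> y < Y \<Longrightarrow> f \<in> F \<Longrightarrow> y - f \<in> V"
    and above: "\<And>x. x \<in> collision_set E k F \<Longrightarrow> x + Max F < Y"
  shows "sumset F (V - collision_set E k F) = X"
proof
  show "sumset F (V - collision_set E k F) \<subseteq> X" using V sumset_mono_right by blast
next
  show "X \<subseteq> sumset F (V - collision_set E k F)"
  proof
    fix y assume y: "y \<in> X"
    show "y \<in> sumset F (V - collision_set E k F)"
    proof (cases "y < Y")
      case True
      then obtain f where "f \<in> F" "y - f \<notin> collision_set E k F"
        using exists_diff_notin_collision_set[OF assms(1-2) k] by blast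
      then show ?thesis using below[OF y True] unfolding mem_sumset_iff by force
    next
      case False
      obtain f w where f: "f \<in> F" "w \<in> V" "y = f + w" using y unfolding V[symmetric] mem_sumset_iff by blast
      have "f \<le> Max F" using f(1) assms(1) by simp
      then have "w \<notin> collision_set E k F" using above f(3) False by fastforce
      then show ?thesis using f unfolding mem_sumset_iff by blast
    qed
  qed
qed

lemma exists_multiple_less:
  fixes m b :: int
  assumes "0 < m"
  shows "\<exists>E. m dvd E \<and> E < b"
proof
  have "m * (- \<bar>b\<bar> - 1) \<le> 1 * (- \<bar>b\<bar> - 1)" using assms by (intro mult_right_mono_neg) auto
  then show "m dvd m * (- \<bar>b\<bar> - 1) \<and> m * (- \<bar>b\<bar> - 1) < b" by simp
qed

definition pinned_complement :: "int \<Rightarrow> int \<Rightarrow> int \<Rightarrow> int set \<Rightarrow> int set \<Rightarrow> int set \<Rightarrow> bool" where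
  "pinned_complement m ft M F T V \<longleftrightarrow>
     sumset F V = mult_int m - T
     \<and> (\<exists>L. \<forall>u. m dvd (u + ft) \<longrightarrow> u < L \<longrightarrow> u \<in> V)
     \<and> (\<forall>a\<in>F. \<exists>z. m dvd z \<and> z < M \<and> (\<forall>a'\<in>F. z - a' \<in> V \<longrightarrow> a' = a))"

lemma sumset_Un_ray:
  fixes m ft M :: int and F T W :: "int set"
  assumes F: "finite F" "\<And>f. f \<in> F \<Longrightarrow> m dvd (f - ft)"
    and T: "\<And>t. t \<in> T \<Longrightarrow> M \<le> t"
    and W: "sumset F W = mult_int m - T"
  shows "sumset F (W \<union> {u. m dvd (u + ft) \<and> u + Max F < M}) = mult_int m - T"
proof -
  have "sumset F {u. m dvd (u + ft) \<and> u + Max F < M} \<subseteq> mult_int m - T"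
  proof
    fix x assume "x \<in> sumset F {u. m dvd (u + ft) \<and> u + Max F < M}"
    then obtain f u where fu: "f \<in> F" "m dvd (u + ft)" "u + Max F < M" "x = f + u"
      unfolding mem_sumset_iff by blast
    have "x = (f - ft) + (u + ft)" using fu(4) by simp
    then have "m dvd x" using dvd_add[OF F(2)[OF fu(1)] fu(2)] by simp
    moreover have "x < M" using Max_ge[OF F(1) fu(1)] fu(3,4) by linarith
    ultimately show "x \<in> mult_int m - T" using T by (force simp: mem_mult_int_iff)
  qed
  then show ?thesis using W by (auto simp: sumset_Un_right)
qed

lemma exists_multiple_gt_twice_diameter:
  fixes m :: int and F :: "int set"
  assumes "0 < m" and "finite F" "F \<noteq> {}"
  shows "\<exists>k. m dvd k \<and> 0 \<le> k \<and> (\<forall>x\<in>F. \<forall>x'\<in>F. 2 * \<bar>x - x'\<bar> < k)"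
proof (intro exI conjI ballI)
  define d where "d = Max F - Min F"
  have "0 \<le> d" using assms(2,3) unfolding d_def by simp
  have "1 * (2 * d + 1) \<le> m * (2 * d + 1)" using assms(1) \<open>0 \<le> d\<close> by (intro mult_right_mono) auto
  show "0 \<le> m * (2 * d + 1)" using assms(1) \<open>0 \<le> d\<close> by simp
  show "m dvd m * (2 * d + 1)" by simp
  fix x x' assume "x \<in> F" "x' \<in> F"
  then have "\<bar>x - x'\<bar> \<le> d"
    using Min_le[OF assms(2)] Max_ge[OF assms(2)] unfolding d_def by (smt (verit))
  then show "2 * \<bar>x - x'\<bar> < m * (2 * d + 1)" using \<open>1 * (2 * d + 1) \<le> m * (2 * d + 1)\<close> by arith
qed

lemma exists_pinned_complement:
  fixes m ft M :: int and F T W :: "int set"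
  assumes m: "0 < m"
    and F: "finite F" "F \<noteq> {}" "\<And>f. f \<in> F \<Longrightarrow> m dvd (f - ft)"
    and T: "\<And>t. t \<in> T \<Longrightarrow> M \<le> t"
    and W: "mult_int m - T = sumset F W"
  shows "\<exists>V. pinned_complement m ft M F T V"
proof -
  obtain k where k: "m dvd k" "0 \<le> k" "\<forall>x\<in>F. \<forall>x'\<in>F. 2 * \<bar>x - x'\<bar> < k"
    using exists_multiple_gt_twice_diameter[OF m F(1,2)] by blast
  obtain E where E: "m dvd E" "E < M - k * Max F - 2 * (Max F - Min F)"
    using exists_multiple_less[OF m] by blast
  define R where "R = {u. m dvd (u + ft) \<and> u + Max F < M}"
  define D where "D = collision_set E k F"
  have F_bounds: "Min F \<le> f" "f \<le> Max F" if "f \<in> F" for f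
    using that F(1) by simp_all
  have WR: "sumset F (W \<union> R) = mult_int m - T"
    using sumset_Un_ray[OF F(1,3) T W[symmetric]] unfolding R_def .
  have "y - f \<in> W \<union> R" if "y \<in> mult_int m - T" "y < M - Max F + Min F" "f \<in> F" for y f
  proof -
    have "m dvd (y - (f - ft))" using that(1) F(3)[OF that(3)] by (auto simp: mem_mult_int_iff)
    then show ?thesis using that F_bounds[OF that(3)] unfolding R_def by (simp add: algebra_simps)
  qed
  then have "sumset F ((W \<union> R) - D) = mult_int m - T"
    unfolding D_def
  proof (rule sumset_diff_collision_set[OF F(1,2) k(3) WR])
    show "x + Max F < M - Max F + Min F" if "x \<in> collision_set E k F" for x
      using collision_set_bounds(2)[OF F(1) k(2) that] E(2) by arith
  qed
  moreover have "\<exists>L. \<forall>u. m dvd (u + ft) \<longrightarrow> u < L \<longrightarrow> u \<in> (W \<union> R) - D"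
  proof (intro exI allI impI)
    fix u assume "m dvd (u + ft)" "u < min (M - Max F) (E + k * Min F - Max F)"
    then show "u \<in> (W \<union> R) - D"
      using collision_set_bounds(1)[OF F(1) k(2)] unfolding R_def D_def by fastforce
  qed
  moreover have "\<exists>z. m dvd z \<and> z < M \<and> (\<forall>a'\<in>F. z - a' \<in> (W \<union> R) - D \<longrightarrow> a' = a)"
    if a: "a \<in> F" for a
  proof (intro exI conjI ballI impI)
    show "m dvd E + k * a" using E(1) k(1) by simp
    have "k * a \<le> k * Max F" using F_bounds(2)[OF a] k(2) by (simp add: mult_left_mono)
    then show "E + k * a < M" using E(2) F_bounds[OF a] by arith
    fix a' assume "a' \<in> F" "E + k * a - a' \<in> (W \<union> R) - D"
    then show "a' = a" using a unfolding D_def collision_set_def by blast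
  qed
  ultimately show ?thesis unfolding pinned_complement_def by blast
qed

lemma exists_pinned_complements:
  fixes m ft M :: int and F :: "int set" and I :: "'i set" and T :: "'i \<Rightarrow> int set"
  assumes "0 < m" "finite F" "F \<noteq> {}" "\<And>f. f \<in> F \<Longrightarrow> m dvd (f - ft)"
    and T: "\<And>i t. i \<in> I \<Longrightarrow> t \<in> T i \<Longrightarrow> M \<le> t"
    and W: "\<forall>i\<in>I. \<exists>W. mult_int m - T i = sumset F W"
  shows "\<exists>V. \<forall>i\<in>I. pinned_complement m ft M F (T i) (V i)"
proof (rule bchoice, rule ballI)
  fix i assume i: "i \<in> I"
  then obtain W where "mult_int m - T i = sumset F W" using W by blast
  then show "\<exists>V. pinned_complement m ft M F (T i) V"
    using exists_pinned_complement[where T = "T i" and W = W] assms(1-4) T[OF i] by blast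
qed

locale shifted_complements =
  fixes m ft M :: int and A F :: "int set" and n :: nat
    and S :: "nat \<Rightarrow> int set" and s :: "nat \<Rightarrow> int" and V :: "nat \<Rightarrow> int set"
  assumes m_pos: "0 < m"
    and A_dvd: "\<And>a. a \<in> A \<Longrightarrow> m dvd a"
    and A_lower: "\<And>a. a \<in> A \<Longrightarrow> M \<le> a"
    and mult_nat_subset: "mult_nat m \<subseteq> A"
    and F_dvd: "\<And>f. f \<in> F \<Longrightarrow> m dvd (f - ft)"
    and n_pos: "1 \<le> n"
    and S_Union: "(\<Union>i\<in>{1..n}. S i) = A"
    and shifts_distinct: "\<And>i j. i \<in> {1..n} \<Longrightarrow> j \<in> {1..n} \<Longrightarrow> m dvd (s i - s j) \<Longrightarrow> i = j"
    and shifts_apart: "\<And>i j. i \<in> {1..n} \<Longrightarrow> j \<in> {1..n} \<Longrightarrow> \<not> m dvd (s i + ft - s j)"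
    and V_pinned: "\<And>i. i \<in> {1..n} \<Longrightarrow> pinned_complement m ft M F (S i) (V i)"
begin

lemma V_sumset: "i \<in> {1..n} \<Longrightarrow> sumset F (V i) = mult_int m - S i"
  using V_pinned unfolding pinned_complement_def by blast

lemma V_tail: "i \<in> {1..n} \<Longrightarrow> \<exists>L. \<forall>u. m dvd (u + ft) \<longrightarrow> u < L \<longrightarrow> u \<in> V i"
  using V_pinned unfolding pinned_complement_def by blast

lemma V_witness: "i \<in> {1..n} \<Longrightarrow> a \<in> F \<Longrightarrow>
    \<exists>z. m dvd z \<and> z < M \<and> (\<forall>a'\<in>F. z - a' \<in> V i \<longrightarrow> a' = a)"
  using V_pinned unfolding pinned_complement_def by blast

definition complement :: "int set" where
  "complement = {w. \<forall>i\<in>{1..n}. (m dvd (w - s i) \<longrightarrow> w = s i)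
                                 \<and> (m dvd (w - s i + ft) \<longrightarrow> w - s i \<in> V i)}"

lemma shift_mem_complement:
  assumes "i \<in> {1..n}"
  shows "s i \<in> complement"
  unfolding complement_def
proof (intro CollectI ballI conjI impI)
  fix j assume j: "j \<in> {1..n}"
  show "s i = s j" if "m dvd (s i - s j)" using shifts_distinct[OF assms j that] by simp
  show "s i - s j \<in> V j" if "m dvd (s i - s j + ft)"
    using shifts_apart[OF assms j] that by (simp add: diff_add_eq)
qed

lemma shift_add_mem_complement:
  assumes i: "i \<in> {1..n}" and u: "u \<in> V i" "m dvd (u + ft)"
  shows "s i + u \<in> complement"
  unfolding complement_def
proof (intro CollectI ballI conjI impI)
  fix j assume j: "j \<in> {1..n}"
  show "s i + u = s j" if "m dvd (s i + u - s j)"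
  proof -
    have "m dvd ((u + ft) - (s i + u - s j))" using u(2) that by (rule dvd_diff)
    moreover have "(u + ft) - (s i + u - s j) = s j + ft - s i" by simp
    ultimately show ?thesis using shifts_apart[OF j i] by simp
  qed
  show "s i + u - s j \<in> V j" if "m dvd (s i + u - s j + ft)"
  proof -
    have "m dvd ((s i + u - s j + ft) - (u + ft))" using that u(2) by (rule dvd_diff)
    moreover have "(s i + u - s j + ft) - (u + ft) = s i - s j" by simp
    ultimately have "i = j" using shifts_distinct[OF i j] by simp
    then show ?thesis using u(1) by simp
  qed
qed

lemma mem_V_imp_dvd:
  assumes "i \<in> {1..n}" "f \<in> F" "u \<in> V i"
  shows "m dvd (u + ft)"
proof -
  have "f + u \<in> sumset F (V i)" using assms(2,3) by (rule add_mem_sumset)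
  then have "m dvd (f + u)" using V_sumset[OF assms(1)] mem_mult_int_iff by blast
  then have "m dvd ((f + u) - (f - ft))" using F_dvd[OF assms(2)] by (rule dvd_diff)
  then show ?thesis by simp
qed

lemma mem_sumset_shift_class:
  assumes i: "i \<in> {1..n}" and z: "m dvd (z - s i)"
  shows "z \<in> sumset (A \<union> F) complement"
proof (cases "z - s i \<in> S i")
  case True
  then have "z - s i \<in> A" using S_Union i by blast
  then have "(z - s i) + s i \<in> sumset (A \<union> F) complement"
    using shift_mem_complement[OF i] by (intro add_mem_sumset) simp_all
  then show ?thesis by simp
next
  case False
  then have "z - s i \<in> sumset F (V i)" using V_sumset[OF i] z mem_mult_int_iff by blast
  then obtain f u where fu: "f \<in> F" "u \<in> V i" "z - s i = f + u" unfolding mem_sumset_iff by blast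
  then have "s i + u \<in> complement" using shift_add_mem_complement[OF i] mem_V_imp_dvd[OF i] by blast
  moreover have "z = f + (s i + u)" using fu(3) by simp
  ultimately show ?thesis using fu(1) unfolding mem_sumset_iff by blast
qed

lemma mem_sumset_shift_minus_class:
  assumes i: "i \<in> {1..n}" and z: "m dvd (z - s i + ft)"
  shows "z \<in> sumset (A \<union> F) complement"
proof -
  obtain L where L: "\<And>u. m dvd (u + ft) \<Longrightarrow> u < L \<Longrightarrow> u \<in> V i" using V_tail[OF i] by blast
  define k where "k = nat (\<bar>z - s i - L\<bar> + 1)"
  have "1 * int k \<le> m * int k" using m_pos by (intro mult_right_mono) auto
  then have small: "z - s i - m * int k < L" unfolding k_def by linarith
  have "m dvd ((z - s i + ft) - m * int k)" using z dvd_diff by simp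
  moreover have "(z - s i + ft) - m * int k = (z - s i - m * int k) + ft" by simp
  ultimately have "s i + (z - s i - m * int k) \<in> complement"
    using shift_add_mem_complement[OF i] L small by metis
  moreover have "m * int k \<in> A" using mult_nat_subset unfolding mult_nat_def by blast
  ultimately have "m * int k + (s i + (z - s i - m * int k)) \<in> sumset (A \<union> F) complement"
    by (intro add_mem_sumset) simp_all
  then show ?thesis by simp
qed

lemma sumset_complement_UNIV: "sumset (A \<union> F) complement = UNIV"
proof (intro set_eqI iffI)
  fix z :: int
  consider i where "i \<in> {1..n}" "m dvd (z - s i)" | i where "i \<in> {1..n}" "m dvd (z - s i + ft)"
    | "\<forall>i\<in>{1..n}. \<not> m dvd (z - s i) \<and> \<not> m dvd (z - s i + ft)" by blast
  then show "z \<in> sumset (A \<union> F) complement"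
  proof cases
    case 3
    then have "z \<in> complement" unfolding complement_def by blast
    moreover have "0 \<in> A" using mult_nat_subset unfolding mult_nat_def by force
    ultimately have "0 + z \<in> sumset (A \<union> F) complement" by (intro add_mem_sumset) simp_all
    then show ?thesis by simp
  qed (simp_all add: mem_sumset_shift_class mem_sumset_shift_minus_class)
qed simp

lemma unique_representation_A:
  assumes c: "c \<in> A"
  shows "\<exists>z. \<forall>c'\<in>A \<union> F. \<forall>w\<in>complement. z = c' + w \<longrightarrow> c' = c"
proof -
  obtain i where i: "i \<in> {1..n}" "c \<in> S i" using c S_Union by blast
  have "c' = c" if c': "c' \<in> A \<union> F" and w: "w \<in> complement" and z: "c + s i = c' + w" for c' w
    using c'
  proof
    assume "c' \<in> A"
    then have "m dvd (c - c')" using A_dvd[OF c] A_dvd by (intro dvd_diff)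
    moreover have "c - c' = w - s i" using z by simp
    ultimately have "w = s i" using w i(1) unfolding complement_def by simp
    then show ?thesis using z by simp
  next
    assume c': "c' \<in> F"
    have "m dvd (c - (c' - ft))" using A_dvd[OF c] F_dvd[OF c'] by (rule dvd_diff)
    moreover have "c - (c' - ft) = w - s i + ft" using z by simp
    ultimately have "w - s i \<in> V i" using w i(1) unfolding complement_def by simp
    then have "c' + (w - s i) \<in> sumset F (V i)" using c' by (rule add_mem_sumset[rotated])
    moreover have "c' + (w - s i) = c" using z by simp
    ultimately have "c \<in> sumset F (V i)" by simp
    then show ?thesis using V_sumset[OF i(1)] i(2) by blast
  qed
  then show ?thesis by blast
qed

lemma unique_representation_F:
  assumes a: "a \<in> F"
  shows "\<exists>z. \<forall>c'\<in>A \<union> F. \<forall>w\<in>complement. z = c' + w \<longrightarrow> c' = a"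
proof -
  have one: "1 \<in> {1..n}" using n_pos by simp
  obtain z where z: "m dvd z" "z < M" "\<And>a'. a' \<in> F \<Longrightarrow> z - a' \<in> V 1 \<Longrightarrow> a' = a"
    using V_witness[OF one a] by blast
  have "c' = a" if c': "c' \<in> A \<union> F" and w: "w \<in> complement" and zw: "z + s 1 = c' + w" for c' w
    using c'
  proof
    assume c': "c' \<in> A"
    have "m dvd (z - c')" using z(1) A_dvd[OF c'] by (rule dvd_diff)
    moreover have "z - c' = w - s 1" using zw by simp
    ultimately have "w = s 1" using w one unfolding complement_def by simp
    then show ?thesis using zw z(2) A_lower[OF c'] by simp
  next
    assume c': "c' \<in> F"
    have "m dvd (z - (c' - ft))" using z(1) F_dvd[OF c'] by (rule dvd_diff)
    moreover have "z - (c' - ft) = w - s 1 + ft" using zw by simp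
    ultimately have "w - s 1 \<in> V 1" using w one unfolding complement_def by simp
    moreover have "w - s 1 = z - c'" using zw by simp
    ultimately show ?thesis using z(3) c' by simp
  qed
  then show ?thesis by blast
qed

lemma min_add_complement_A_Un_F: "min_add_complement (A \<union> F) complement"
  using sumset_complement_UNIV unique_representation_A unique_representation_F
  by (intro min_add_complementI) blast+

end

theorem theorem4:
  fixes m ft :: int and n :: nat and B F :: "int set" and S :: "nat \<Rightarrow> int set"
  assumes hm: "m \<ge> 2"
    and hB: "finite B" "B \<noteq> {}" "B \<subseteq> mult_int m"
    and hft: "1 \<le> ft" "ft \<le> m - 1"
    and hF: "finite F" "F \<noteq> {}" "\<forall>x\<in>F. x mod m = ft"
    and hn: "n \<ge> 1"
    and hS: "(\<Union>i\<in>{1..n}. S i) = mult_nat m \<union> B"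
    and hW: "\<forall>i\<in>{1..n}. \<exists>W. mult_int m - S i = sumset F W"
    and hineq: "m \<ge> ft + 2 * ft * (int n div ft) + int n mod ft"
  shows "arises_as_MAC (mult_nat m \<union> B \<union> F)"
proof -
  define M where "M = min 0 (Min B)"
  have m_pos: "0 < m" using hm by simp
  have A_dvd: "m dvd a" and A_lower: "M \<le> a" if "a \<in> mult_nat m \<union> B" for a
    using that hB m_pos unfolding mult_nat_def M_def by (auto simp: mem_mult_int_iff min_le_iff_disj)
  have F_dvd: "m dvd (f - ft)" if "f \<in> F" for f
    using that hF(3) dvd_minus_mod[of m f] by simp
  have ft_pos: "0 < ft" using hft(1) by simp
  have room: "ft + block_pos ft (int n) \<le> m" using hineq unfolding block_pos_def by simp
  obtain s where shifts_distinct: "\<forall>i\<in>{1..n}. \<forall>j\<in>{1..n}. m dvd (s i - s j) \<longrightarrow> i = j"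
    and shifts_apart: "\<forall>i\<in>{1..n}. \<forall>j\<in>{1..n}. \<not> m dvd (s i + ft - s j)"
    using exists_separated_shifts[OF ft_pos room] by blast
  have "M \<le> t" if "i \<in> {1..n}" "t \<in> S i" for i t
    using A_lower that hS[symmetric] by blast
  then have "\<exists>V. \<forall>i\<in>{1..n}. pinned_complement m ft M F (S i) (V i)"
    using exists_pinned_complements[where I = "{1..n}" and T = S] m_pos hF(1,2) F_dvd hW by blast
  then obtain V where V: "\<forall>i\<in>{1..n}. pinned_complement m ft M F (S i) (V i)" ..
  interpret shifted_complements m ft M "mult_nat m \<union> B" F n S s V
    by unfold_locales
      (fact m_pos A_dvd A_lower Un_upper1 F_dvd hn hS | use shifts_distinct shifts_apart V in blast)+
  show ?thesis unfolding arises_as_MAC_def using min_add_complement_A_Un_F by blast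
qed

end
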